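(* Let $n\ge1$ and $1\le m\le n$ be integers, $x>0$, and $\Delta\equiv\lfloor\frac{n+1}{m+1}\rfloor$. Let $\Delta_1,\dots,\Delta_{m+1}\in\{\Delta,\Delta+1\}$ be integers with $\sum_{k=1}^{m+1}\Delta_k=n+1$, and let $\boldsymbol v^*\in\mathbb{R}^n$ have $i$-th coordinate $x$ if $i\in\{\sum_{k=1}^{j}\Delta_k:1\le j\le m\}$ and $0$ otherwise. Then $\boldsymbol v^*$ minimizes $f$ over $\Lambda(mx)$, and \[ \min_{\boldsymbol v\in\Lambda(mx)} f(\boldsymbol v)=f(\boldsymbol v^* )=\Delta(n+1)x-\tfrac12(m+1)x\,\Delta(\Delta+1). \] Moreover, for every $\boldsymbol v\in\Lambda(mx)$ and every $1\le j\le n$, $\sum_{l=1}^{n+1-j}\bigl(x-\sum_{i=l}^{l+j-1}v_i\bigr)^+\ge\sum_{l=1}^{n+1-j}\bigl(x-\sum_{i=l}^{l+j-1}v^*_i\bigr)^+$.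
   Context: For $w>0$, $\Lambda(w)$ is the set of vectors in $\mathbb{R}^n$ with nonnegative coordinates summing to $w$. For $\boldsymbol v=(v_1,\dots,v_n)$, $f(\boldsymbol v)\equiv\sum_{1\le l\le k\le n}\bigl(x-\sum_{i=l}^k v_i\bigr)^+$, where $a^+=\max\{a,0\}$. *)

theory Defs
  imports Complex_Main
begin

text \<open>Vectors in R^n are represented as functions nat => real; only the
coordinates 1..n matter.\<close>

definition Lambda :: "nat \<Rightarrow> real \<Rightarrow> (nat \<Rightarrow> real) set" where
  "Lambda n w = {v. (\<forall>i\<in>{1..n}. v i \<ge> 0) \<and> (\<Sum>i=1..n. v i) = w}"

definition posp :: "real \<Rightarrow> real" where
  "posp a = max a 0"

definition fobj :: "nat \<Rightarrow> real \<Rightarrow> (nat \<Rightarrow> real) \<Rightarrow> real" where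
  "fobj n x v = (\<Sum>k=1..n. \<Sum>l=1..k. posp (x - (\<Sum>i=l..k. v i)))"

end

theory Submission imports Defs begin

text \<open>Grouping the terms of \<open>f\<close> by window length \<open>j\<close> writes \<open>f(v)\<close> as the sum over \<open>j\<close> of
  \<open>W\<^sub>j(v) = \<Sum>\<^sub>l (x - (v\<^sub>l + \<dots> + v\<^sub>l\<^sub>+\<^sub>j\<^sub>-\<^sub>1))\<^sup>+\<close>. Every coordinate lies in at most \<open>j\<close> of
  the \<open>n + 1 - j\<close> windows of length \<open>j\<close>, so on \<open>\<Lambda>(mx)\<close> dropping the positive part gives
  \<open>W\<^sub>j(v) \<ge> x \<cdot> max 0 (n + 1 - j(m + 1))\<close>. The support of \<open>v*\<close> cuts \<open>{0, \<dots>, n + 1}\<close> into gaps of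
  length \<open>\<Delta>\<close> or \<open>\<Delta> + 1\<close>: for \<open>j \<le> \<Delta>\<close> no window of length \<open>j\<close> contains two marks and every
  mark lies in exactly \<open>j\<close> windows, so the bound is attained; for \<open>j > \<Delta>\<close> every window contains a
  mark and \<open>W\<^sub>j(v*) = 0\<close>.\<close>

definition window_deficit :: "nat \<Rightarrow> real \<Rightarrow> (nat \<Rightarrow> real) \<Rightarrow> nat \<Rightarrow> real" where
  "window_deficit n x v j = (\<Sum>l=1..n+1-j. posp (x - (\<Sum>i=l..l+j-1. v i)))"

lemma sum_triangle_by_length:
  fixes g :: "nat \<Rightarrow> nat \<Rightarrow> 'a::comm_monoid_add"
  shows "(\<Sum>k=1..n. \<Sum>l=1..k. g l k) = (\<Sum>j=1..n. \<Sum>l=1..n+1-j. g l (l+j-1))"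
proof -
  have "(\<Sum>k=1..n. \<Sum>l=1..k. g l k) = (\<Sum>(k,l)\<in>(SIGMA k:{1..n}. {1..k}). g l k)"
    by (rule sum.Sigma) auto
  also have "\<dots> = (\<Sum>(j,l)\<in>(SIGMA j:{1..n}. {1..n+1-j}). g l (l+j-1))"
    by (rule sum.reindex_bij_witness[where i="\<lambda>(j,l). (l+j-1, l)" and j="\<lambda>(k,l). (k-l+1, l)"]) auto
  also have "\<dots> = (\<Sum>j=1..n. \<Sum>l=1..n+1-j. g l (l+j-1))"
    by (rule sum.Sigma[symmetric]) auto
  finally show ?thesis .
qed

lemma fobj_eq_sum_window_deficit: "fobj n x v = (\<Sum>j=1..n. window_deficit n x v j)"
  unfolding fobj_def window_deficit_def
  by (rule sum_triangle_by_length)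

lemma sum_window_sums:
  fixes v :: "nat \<Rightarrow> 'a::comm_monoid_add"
  assumes "1 \<le> j" "j \<le> n"
  shows "(\<Sum>l=1..n+1-j. \<Sum>i=l..l+j-1. v i) = (\<Sum>t<j. \<Sum>i=1+t..n+1-j+t. v i)"
proof -
  have window: "(\<Sum>i=l..l+j-1. v i) = (\<Sum>t<j. v (l+t))" for l
  proof -
    have "{l..l+j-1} = (\<lambda>t. l+t) ` {..<j}"
    proof (intro equalityI subsetI)
      fix i assume "i \<in> {l..l+j-1}"
      then show "i \<in> (\<lambda>t. l+t) ` {..<j}" using assms(1) by (intro image_eqI[of _ _ "i - l"]) auto
    qed auto
    then show ?thesis by (simp add: sum.reindex)
  qed
  have "(\<Sum>l=1..n+1-j. \<Sum>i=l..l+j-1. v i) = (\<Sum>t<j. \<Sum>l=1..n+1-j. v (l+t))"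
    unfolding window by (rule sum.swap)
  also have "\<dots> = (\<Sum>t<j. \<Sum>i=1+t..n+1-j+t. v i)"
    using sum.shift_bounds_cl_nat_ivl[of v 1 _ "n+1-j"] by simp
  finally show ?thesis .
qed

lemma window_deficit_ge_mass:
  assumes v: "v \<in> Lambda n w" and j: "1 \<le> j" "j \<le> n"
  shows "max 0 (real (n+1-j) * x - real j * w) \<le> window_deficit n x v j"
proof -
  have "(\<Sum>i=1+t..n+1-j+t. v i) \<le> w" if "t < j" for t
  proof -
    have "{1+t..n+1-j+t} \<subseteq> {1..n}" using that j by auto
    then show ?thesis
      using v sum_mono2[of "{1..n}" "{1+t..n+1-j+t}" v] by (auto simp: Lambda_def)
  qed
  then have "(\<Sum>t<j. \<Sum>i=1+t..n+1-j+t. v i) \<le> (\<Sum>t<j. w)"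
    by (intro sum_mono) simp
  then have "(\<Sum>l=1..n+1-j. \<Sum>i=l..l+j-1. v i) \<le> real j * w"
    by (simp only: sum_window_sums[OF j]) simp
  moreover have "(\<Sum>l=1..n+1-j. x - (\<Sum>i=l..l+j-1. v i)) \<le> window_deficit n x v j"
    "0 \<le> window_deficit n x v j"
    unfolding window_deficit_def by (auto intro!: sum_mono sum_nonneg simp: posp_def)
  ultimately show ?thesis by (simp add: sum_subtractf)
qed

lemma window_deficit_ge_bound:
  assumes "v \<in> Lambda n (real m * x)" "0 \<le> x" "1 \<le> j" "j \<le> n"
  shows "x * max 0 (real (n + 1) - real j * real (m + 1)) \<le> window_deficit n x v j"
proof -
  have "real (n + 1 - j) * x - real j * (real m * x) = x * (real (n + 1) - real j * real (m + 1))"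
    using assms(4) by (simp add: of_nat_diff algebra_simps)
  then show ?thesis using window_deficit_ge_mass[OF assms(1,3,4), of x] assms(2)
    by (simp add: max_mult_distrib_left)
qed

lemma window_deficit_sparse_marks:
  fixes P :: "nat set"
  assumes "finite P" "0 \<le> x" and j: "1 \<le> j" "j \<le> n"
    and bounds: "\<And>q. q \<in> P \<Longrightarrow> j \<le> q \<and> q + j \<le> n + 1"
    and spread: "\<And>q q'. q \<in> P \<Longrightarrow> q' \<in> P \<Longrightarrow> q < q' \<Longrightarrow> q + j \<le> q'"
  shows "window_deficit n x (\<lambda>i. if i \<in> P then x else 0) j
           = real (n+1-j) * x - real j * real (card P) * x"
proof -
  let ?v = "\<lambda>i. if i \<in> P then x else 0"
  have sum_marks: "(\<Sum>i\<in>A. ?v i) = real (card (A \<inter> P)) * x" if "finite A" for A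
    using sum.inter_restrict[OF that, of "\<lambda>_. x" P] by simp
  have "card ({l..l+j-1} \<inter> P) \<le> Suc 0" for l
  proof (subst card_le_Suc0_iff_eq, simp, intro ballI)
    fix q q' assume "q \<in> {l..l+j-1} \<inter> P" "q' \<in> {l..l+j-1} \<inter> P"
    then show "q = q'" using spread[of q q'] spread[of q' q] j
      by (cases q q' rule: linorder_cases) auto
  qed
  then have "(\<Sum>i=l..l+j-1. ?v i) \<le> x" for l
    using \<open>0 \<le> x\<close> by (simp add: sum_marks mult_left_le_one_le)
  then have "window_deficit n x ?v j = (\<Sum>l=1..n+1-j. x - (\<Sum>i=l..l+j-1. ?v i))"
    unfolding window_deficit_def posp_def by (intro sum.cong) auto
  also have "\<dots> = real (n+1-j) * x - (\<Sum>t<j. \<Sum>i=1+t..n+1-j+t. ?v i)"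
    by (simp only: sum_subtractf sum_window_sums[OF j]) simp
  also have "(\<Sum>t<j. \<Sum>i=1+t..n+1-j+t. ?v i) = (\<Sum>t<j. real (card P) * x)"
  proof (rule sum.cong[OF refl])
    fix t assume "t \<in> {..<j}"
    then have "{1+t..n+1-j+t} \<inter> P = P" using bounds by fastforce
    then show "(\<Sum>i=1+t..n+1-j+t. ?v i) = real (card P) * x" by (simp add: sum_marks)
  qed
  finally show ?thesis by simp
qed

lemma window_deficit_dense_marks:
  assumes "0 \<le> x"
    and cover: "\<And>l. 1 \<le> l \<Longrightarrow> l + j \<le> n + 1 \<Longrightarrow> \<exists>q\<in>P. l \<le> q \<and> q < l + j"
  shows "window_deficit n x (\<lambda>i. if i \<in> P then x else 0) j = 0"
  unfolding window_deficit_def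
proof (rule sum.neutral, rule ballI)
  fix l assume "l \<in> {1..n+1-j}"
  then obtain q where "q \<in> P" "q \<in> {l..l+j-1}" using cover[of l] by force
  then have "x \<le> (\<Sum>i=l..l+j-1. if i \<in> P then x else 0)"
    using member_le_sum[of q "{l..l+j-1}" "\<lambda>i. if i \<in> P then x else 0"] \<open>0 \<le> x\<close> by auto
  then show "posp (x - (\<Sum>i=l..l+j-1. if i \<in> P then x else 0)) = 0" by (simp add: posp_def)
qed

lemma sum_max_0_affine:
  fixes N c n :: nat
  assumes "0 < c" "N div c \<le> n"
  shows "(\<Sum>j=1..n. max 0 (real N - real j * real c))
           = real (N div c) * real N - real c * real (N div c) * real (N div c + 1) / 2"
proof -
  define d where "d = N div c"
  have gauss: "(\<Sum>j=1..k. real j) = real k * (real k + 1) / 2" for k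
    by (induction k) (simp_all add: field_simps)
  have "(\<Sum>j=1..n. max 0 (real N - real j * real c))
          = (\<Sum>j=1..d. max 0 (real N - real j * real c)) + (\<Sum>j=d+1..n. max 0 (real N - real j * real c))"
    using sum.ub_add_nat[of 1 d _ "n - d"] assms(2) by (simp add: d_def)
  also have "(\<Sum>j=d+1..n. max 0 (real N - real j * real c)) = 0"
  proof (rule sum.neutral, rule ballI)
    fix j assume "j \<in> {d+1..n}"
    then have "N < j * c" using div_less_iff_less_mult[OF assms(1), of N j] by (simp add: d_def)
    then have "real N \<le> real j * real c" by (metis of_nat_le_iff of_nat_mult less_imp_le)
    then show "max 0 (real N - real j * real c) = 0" by simp
  qed
  also have "(\<Sum>j=1..d. max 0 (real N - real j * real c)) = (\<Sum>j=1..d. real N - real c * real j)"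
  proof (rule sum.cong[OF refl])
    fix j assume "j \<in> {1..d}"
    then have "j * c \<le> N" using less_eq_div_iff_mult_less_eq[OF assms(1)] by (simp add: d_def)
    then have "real j * real c \<le> real N" by (metis of_nat_le_iff of_nat_mult)
    then show "max 0 (real N - real j * real c) = real N - real c * real j"
      by (simp add: mult.commute)
  qed
  also have "\<dots> = real d * real N - real c * (real d * (real d + 1) / 2)"
    by (simp only: sum_subtractf sum_distrib_left[symmetric] gauss) simp
  finally show ?thesis by (simp add: d_def)
qed

lemma partial_sums_hit_window:
  fixes p :: "nat \<Rightarrow> nat"
  assumes "p 0 < l" "l + j \<le> p (Suc m)"
    and step: "\<And>t. t \<le> m \<Longrightarrow> p (Suc t) \<le> p t + j"
  shows "\<exists>t\<in>{1..m}. l \<le> p t \<and> p t < l + j"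
proof -
  define t where "t = (LEAST t. l \<le> p t)"
  have reached: "l \<le> p t" and "t \<le> Suc m"
    using assms(2) LeastI[of "\<lambda>t. l \<le> p t" "Suc m"] Least_le[of "\<lambda>t. l \<le> p t" "Suc m"]
    by (auto simp: t_def)
  have "t \<noteq> 0" using reached assms(1) by (metis leD)
  then obtain s where s: "t = Suc s" using not0_implies_Suc by blast
  have "p s < l" using not_less_Least[of s "\<lambda>t. l \<le> p t"] s by (simp add: t_def)
  then have "p t < l + j" using step[of s] s \<open>t \<le> Suc m\<close> by simp
  moreover have "t \<noteq> Suc m" using \<open>p t < l + j\<close> assms(2) by auto
  ultimately show ?thesis using reached s \<open>t \<le> Suc m\<close> by (intro bexI[of _ t]) auto
qed

locale balanced_composition =
  fixes D :: "nat \<Rightarrow> nat" and d m n :: nat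
  assumes part_sizes: "\<forall>k\<in>{1..m+1}. D k = d \<or> D k = d + 1"
    and d_pos: "1 \<le> d"
    and parts_sum: "(\<Sum>k=1..m+1. D k) = n + 1"
begin

definition cut_point :: "nat \<Rightarrow> nat" where
  "cut_point j = (\<Sum>k=1..j. D k)"

definition cut_points :: "nat set" where
  "cut_points = cut_point ` {1..m}"

lemma cut_point_gap:
  assumes "a \<le> b" "b \<le> m + 1"
  shows "cut_point a + (b - a) * d \<le> cut_point b"
proof -
  have "cut_point b = cut_point a + (\<Sum>k=a+1..b. D k)"
    using sum.ub_add_nat[of 1 a D "b - a"] assms(1) by (simp add: cut_point_def)
  moreover have "of_nat (card {a+1..b}) * d \<le> (\<Sum>k=a+1..b. D k)"
    by (rule sum_bounded_below) (use part_sizes assms in force)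
  ultimately show ?thesis by simp
qed

lemma cut_point_step: "t \<le> m \<Longrightarrow> cut_point (Suc t) \<le> cut_point t + (d + 1)"
  using part_sizes by (force simp: cut_point_def)

lemma cut_point_less_gap:
  assumes "a < b" "b \<le> m + 1"
  shows "cut_point a + d \<le> cut_point b"
proof -
  have "d \<le> (b - a) * d" using assms(1) by (cases "b - a") auto
  then show ?thesis using cut_point_gap[of a b] assms by linarith
qed

lemma cut_points_bounds:
  assumes "q \<in> cut_points"
  shows "d \<le> q \<and> q + d \<le> n + 1"
proof -
  obtain k where k: "k \<in> {1..m}" "q = cut_point k" using assms by (auto simp: cut_points_def)
  have "cut_point 0 + d \<le> cut_point k" "cut_point k + d \<le> cut_point (m + 1)"
    using k by (auto intro!: cut_point_less_gap)
  then show ?thesis using k parts_sum by (simp add: cut_point_def)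
qed

lemma cut_point_strict_mono: "strict_mono_on {..m+1} cut_point"
  using cut_point_less_gap d_pos by (intro strict_mono_onI) fastforce

lemma cut_points_spread:
  assumes "q \<in> cut_points" "q' \<in> cut_points" "q < q'"
  shows "q + d \<le> q'"
proof -
  obtain a b where ab: "a \<in> {1..m}" "b \<in> {1..m}" "q = cut_point a" "q' = cut_point b"
    using assms(1,2) by (auto simp: cut_points_def)
  have "a < b"
  proof (rule ccontr)
    assume "\<not> a < b"
    then have "cut_point b \<le> cut_point a"
      using strict_mono_on_leD[OF cut_point_strict_mono] ab by force
    then show False using ab assms(3) by simp
  qed
  then show ?thesis using cut_point_less_gap ab by simp
qed

lemma card_cut_points: "card cut_points = m"
proof -
  have "inj_on cut_point {1..m}"
    using strict_mono_on_imp_inj_on[OF cut_point_strict_mono] by (rule inj_on_subset) auto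
  then show ?thesis by (simp add: cut_points_def card_image)
qed

lemma cut_points_cover:
  assumes "1 \<le> l" "l + (d + 1) \<le> n + 1"
  shows "\<exists>q\<in>cut_points. l \<le> q \<and> q < l + (d + 1)"
proof -
  have "cut_point 0 < l" "l + (d + 1) \<le> cut_point (Suc m)"
    using assms parts_sum by (simp_all add: cut_point_def)
  then obtain t where "t \<in> {1..m}" "l \<le> cut_point t" "cut_point t < l + (d + 1)"
    using partial_sums_hit_window[of cut_point, OF _ _ cut_point_step] by blast
  then show ?thesis by (auto simp: cut_points_def)
qed

lemma window_deficit_cut_points_le:
  assumes "0 \<le> x" "1 \<le> j" "j \<le> n"
  shows "window_deficit n x (\<lambda>i. if i \<in> cut_points then x else 0) j
           \<le> x * max 0 (real (n + 1) - real j * real (m + 1))"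
proof (cases "j \<le> d")
  case True
  have "window_deficit n x (\<lambda>i. if i \<in> cut_points then x else 0) j
          = real (n+1-j) * x - real j * real m * x"
  proof -
    have "finite cut_points" by (simp add: cut_points_def)
    moreover have "j \<le> q \<and> q + j \<le> n + 1" if "q \<in> cut_points" for q
      using cut_points_bounds[OF that] True by linarith
    moreover have "q + j \<le> q'" if "q \<in> cut_points" "q' \<in> cut_points" "q < q'" for q q'
      using cut_points_spread[OF that] True by linarith
    ultimately show ?thesis
      using window_deficit_sparse_marks[OF _ assms] card_cut_points by simp
  qed
  also have "\<dots> = x * (real (n + 1) - real j * real (m + 1))"
    using assms(3) by (simp add: of_nat_diff algebra_simps)
  finally show ?thesis using assms(1) by (simp add: mult_left_mono)
next
  case False
  have "\<exists>q\<in>cut_points. l \<le> q \<and> q < l + j" if "1 \<le> l" "l + j \<le> n + 1" for l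
    using cut_points_cover[of l] that False by fastforce
  then have "window_deficit n x (\<lambda>i. if i \<in> cut_points then x else 0) j = 0"
    by (rule window_deficit_dense_marks[OF assms(1)])
  then show ?thesis using assms(1) by simp
qed

lemma cut_points_subset: "cut_points \<subseteq> {1..n}"
  using cut_points_bounds d_pos by fastforce

lemma cut_points_marks_in_Lambda:
  assumes "0 \<le> x"
  shows "(\<lambda>i. if i \<in> cut_points then x else 0) \<in> Lambda n (real m * x)"
proof -
  have "(\<Sum>i=1..n. if i \<in> cut_points then x else 0) = (\<Sum>i\<in>{1..n} \<inter> cut_points. x)"
    using sum.inter_restrict[of "{1..n}" "\<lambda>_. x" cut_points] by simp
  also have "\<dots> = real m * x" using cut_points_subset card_cut_points by (simp add: Int_absorb1)
  finally show ?thesis using assms by (simp add: Lambda_def)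
qed

lemma window_deficit_cut_points:
  assumes "0 \<le> x" "1 \<le> j" "j \<le> n"
  shows "window_deficit n x (\<lambda>i. if i \<in> cut_points then x else 0) j
           = x * max 0 (real (n + 1) - real j * real (m + 1))"
  using window_deficit_cut_points_le[OF assms] window_deficit_ge_bound[OF cut_points_marks_in_Lambda assms]
    assms(1) by linarith

lemma fobj_cut_points_marks_le:
  assumes "0 \<le> x" "v \<in> Lambda n (real m * x)"
  shows "fobj n x (\<lambda>i. if i \<in> cut_points then x else 0) \<le> fobj n x v"
  unfolding fobj_eq_sum_window_deficit
  using window_deficit_cut_points window_deficit_ge_bound[OF assms(2,1)] assms(1)
  by (intro sum_mono) simp

end

lemma div_plus_one_bounds:
  fixes m n :: nat
  assumes "1 \<le> m" "m \<le> n"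
  shows "1 \<le> (n + 1) div (m + 1) \<and> (n + 1) div (m + 1) \<le> n"
proof -
  have "(n + 1) div (m + 1) \<le> (n + 1) div 2" using div_le_mono2[of 2 "m + 1" "n + 1"] assms(1) by simp
  then show ?thesis using assms less_eq_div_iff_mult_less_eq[of "m + 1" 1 "n + 1"] by simp
qed

theorem mainTheorem3:
  fixes n m :: nat and x :: real and D :: "nat \<Rightarrow> nat" and vstar :: "nat \<Rightarrow> real"
  assumes "n \<ge> 1" and "1 \<le> m" and "m \<le> n" and "x > 0"
    and "\<forall>k\<in>{1..m+1}. D k = (n+1) div (m+1) \<or> D k = (n+1) div (m+1) + 1"
    and "(\<Sum>k=1..m+1. D k) = n + 1"
    and "\<forall>i. vstar i = (if i \<in> {(\<Sum>k=1..j. D k) | j. 1 \<le> j \<and> j \<le> m} then x else 0)"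
  shows "vstar \<in> Lambda n (real m * x)
    \<and> (\<forall>v\<in>Lambda n (real m * x). fobj n x vstar \<le> fobj n x v)
    \<and> (INF v\<in>Lambda n (real m * x). fobj n x v) = fobj n x vstar
    \<and> fobj n x vstar = real ((n+1) div (m+1)) * real (n+1) * x
          - (1/2) * real (m+1) * x * real ((n+1) div (m+1)) * real ((n+1) div (m+1) + 1)
    \<and> (\<forall>v\<in>Lambda n (real m * x). \<forall>j\<in>{1..n}.
          (\<Sum>l=1..n+1-j. posp (x - (\<Sum>i=l..l+j-1. v i)))
            \<ge> (\<Sum>l=1..n+1-j. posp (x - (\<Sum>i=l..l+j-1. vstar i))))"
proof -
  define d where "d = (n + 1) div (m + 1)"
  have d: "1 \<le> d" "d \<le> n" using div_plus_one_bounds[OF assms(2,3)] by (simp_all add: d_def)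
  interpret balanced_composition D d m n
    using assms(5,6) d by unfold_locales (simp_all add: d_def)
  have "{(\<Sum>k=1..j. D k) | j. 1 \<le> j \<and> j \<le> m} = cut_points"
    by (auto simp: cut_points_def cut_point_def)
  then have vstar: "vstar = (\<lambda>i. if i \<in> cut_points then x else 0)" using assms(7) by auto
  have feasible: "vstar \<in> Lambda n (real m * x)"
    and minimal: "\<forall>v\<in>Lambda n (real m * x). fobj n x vstar \<le> fobj n x v"
    using cut_points_marks_in_Lambda fobj_cut_points_marks_le assms(4) by (simp_all add: vstar)
  have "fobj n x vstar = x * (\<Sum>j=1..n. max 0 (real (n + 1) - real j * real (m + 1)))"
    using assms(4) by (simp add: fobj_eq_sum_window_deficit vstar window_deficit_cut_points sum_distrib_left)
  also have "\<dots> = x * (real d * real (n + 1) - real (m + 1) * real d * real (d + 1) / 2)"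
    unfolding d_def using d by (subst sum_max_0_affine) (simp_all add: d_def)
  finally have "fobj n x vstar = real d * real (n+1) * x - (1/2) * real (m+1) * x * real d * real (d + 1)"
    by (simp add: algebra_simps)
  moreover have "(INF v\<in>Lambda n (real m * x). fobj n x v) = fobj n x vstar"
    using feasible minimal by (intro cInf_eq_minimum) auto
  ultimately show ?thesis
    using feasible minimal window_deficit_ge_bound window_deficit_cut_points assms(4)
    unfolding d_def window_deficit_def vstar by simp
qed

end
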